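(* Let $N\ge2$, $p\in(1,\infty)\setminus\{2\}$, and assume $(p-1)(N-1)>1$ if $p>2$. Let $u:\mathbb{R}^N\to[0,\infty)$ be a nonnegative viscosity solution of $$-\widetilde\Delta_p u\ge u^q+|Du|^\gamma\quad\text{in }\mathbb{R}^N.$$ If $p>2$, $1<\gamma\le\frac{(p-1)(N-1)+1}{(p-1)(N-1)}$ and $q>\frac{(p-1)(N-1)+1}{(p-1)(N-1)-1}$, then $u$ is constant. If $1<p<2$, $1<\gamma\le\frac{N+p-2}{N-1}$ and $q>\frac{N+p-2}{N-p}$, then $u$ is constant.
   Context: The normalized $p$-Laplacian is $-\widetilde\Delta_p u=-\frac1p|Du|^{2-p}\mathrm{div}(|Du|^{p-2}Du)=-\mathrm{Tr}(A(Du)D^2u)$, where $A(\xi)=\frac1p\big(I_N+(p-2)\frac{\xi\otimes\xi}{|\xi|^2}\big)$ for $\xi\ne0$. Viscosity supersolutions of $-\widetilde\Delta_p u\ge H(u,Du)$ are defined in the standard way for discontinuous operators: $u$ is lower semicontinuous and whenever $\varphi\in C^2$ and $u-\varphi$ has a local minimum at $x_0$, $G^*(D\varphi(x_0),D^2\varphi(x_0))\ge H(u(x_0),D\varphi(x_0))$, where $G^*$ is the upper semicontinuous envelope of $(\xi,X)\mapsto-\mathrm{Tr}(A(\xi)X)$. *)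

theory Defs
  imports "HOL-Analysis.Analysis"
begin

definition lsc :: "('a::topological_space \<Rightarrow> real) \<Rightarrow> bool" where
  "lsc u \<longleftrightarrow> (\<forall>x t. t < u x \<longrightarrow> (\<forall>\<^sub>F y in at x. t < u y))"

definition C2_with :: "(real^'n \<Rightarrow> real) \<Rightarrow> (real^'n \<Rightarrow> real^'n) \<Rightarrow> (real^'n \<Rightarrow> real^'n^'n) \<Rightarrow> bool" where
  "C2_with phi Dphi D2phi \<longleftrightarrow>
     (\<forall>x. (phi has_derivative (\<lambda>h. Dphi x \<bullet> h)) (at x)) \<and> continuous_on UNIV Dphi \<and>
     (\<forall>x. (Dphi has_derivative (\<lambda>h. D2phi x *v h)) (at x)) \<and> continuous_on UNIV D2phi"

text \<open>The matrix A(xi) of the normalized p-Laplacian, for xi \<noteq> 0.\<close>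
definition Amat :: "real \<Rightarrow> real^'n \<Rightarrow> real^'n^'n" where
  "Amat p \<xi> = (1/p) *\<^sub>R (mat 1 + ((p - 2) / (norm \<xi>)\<^sup>2) *\<^sub>R (\<chi> i j. \<xi>$i * \<xi>$j))"

definition Gop :: "real \<Rightarrow> real^'n \<Rightarrow> real^'n^'n \<Rightarrow> real" where
  "Gop p \<xi> X = - trace (Amat p \<xi> ** X)"

text \<open>Upper semicontinuous envelope of G (G being defined on xi \<noteq> 0).\<close>
definition Gstar :: "real \<Rightarrow> real^'n \<Rightarrow> real^'n^'n \<Rightarrow> ereal" where
  "Gstar p \<xi> X = Limsup (at (\<xi>, X) within {z. fst z \<noteq> 0}) (\<lambda>z. ereal (Gop p (fst z) (snd z)))"

definition visc_super :: "real \<Rightarrow> (real \<Rightarrow> real^'n \<Rightarrow> real) \<Rightarrow> (real^'n \<Rightarrow> real) \<Rightarrow> bool" where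
  "visc_super p H u \<longleftrightarrow> lsc u \<and>
     (\<forall>phi Dphi D2phi x0. C2_with phi Dphi D2phi \<longrightarrow>
        (\<exists>e>0. \<forall>y\<in>ball x0 e. u y - phi y \<ge> u x0 - phi x0) \<longrightarrow>
        Gstar p (Dphi x0) (D2phi x0) \<ge> ereal (H (u x0) (Dphi x0)))"

end

theory Submission
  imports Defs
begin

(* Only the gradient term of the right-hand side is used.
   Suppose u is not constant, let M = inf u and pick x0 with u x0 > M. By lower semicontinuity
   u > M + delta on a ball around x0, while u x1 < M + delta/2 for some x1. On an annulus
   s0 <= |x - x0|^2 <= s2 we build the radial function phi = M + delta - int_s0^|x-x0|^2 zeta,
   a strict classical subsolution of -Delta_p phi < |D phi|^gamma that is below u on both
   boundary spheres and at least M + delta/2 at x1. At a minimum point of u - phi in the annulus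
   the viscosity inequality would contradict strictness, so phi <= u there, which fails at x1.
   Since 1/k > 1, zeta is not integrable at the singularity S, which lets phi drop below M at
   some s2 < S, while taking S large keeps the drop before x1 below delta/2.
   The exponent conditions are exactly what the profile zeta needs: gamma = 1 + k with
   0 < k < 1 and k (N - 1) / (p - 1) <= 1. *)

section \<open>Piecewise \<open>C\<^sup>2\<close> extension of a function on an interval\<close>

definition glue :: "real \<Rightarrow> real \<Rightarrow> (real \<Rightarrow> real) \<Rightarrow> (real \<Rightarrow> real) \<Rightarrow> (real \<Rightarrow> real) \<Rightarrow> real \<Rightarrow> real"
  where "glue a b f g h x = (if x < a then f x else if b < x then h x else g x)"

lemma has_field_derivative_at_join:
  fixes F f g :: "real \<Rightarrow> real"
  assumes "d > 0"
    and f: "(f has_field_derivative D) (at c within {c - d..c})"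
    and g: "(g has_field_derivative D) (at c within {c..c + d})"
    and "\<And>x. x \<in> {c - d..c} \<Longrightarrow> F x = f x" "\<And>x. x \<in> {c..c + d} \<Longrightarrow> F x = g x"
  shows "(F has_field_derivative D) (at c)"
proof -
  have "(F has_field_derivative D) (at c within {c - d..c})"
    by (rule has_field_derivative_transform_within[OF f \<open>d > 0\<close>]) (use assms in auto)
  moreover have "(F has_field_derivative D) (at c within {c..c + d})"
    by (rule has_field_derivative_transform_within[OF g \<open>d > 0\<close>]) (use assms in auto)
  ultimately have "(F has_field_derivative D) (at c within {c - d..c} \<union> {c..c + d})"
    unfolding has_field_derivative_iff Lim_within_Un by blast
  moreover have "{c - d..c} \<union> {c..c + d} = {c - d..c + d}"
    using \<open>d > 0\<close> by auto
  ultimately show ?thesis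
    using \<open>d > 0\<close> by (simp add: at_within_Icc_at)
qed

lemma glue_has_field_derivative:
  fixes f g h f' g' h' :: "real \<Rightarrow> real"
  assumes "a < b"
    and f: "\<And>x. (f has_field_derivative f' x) (at x)"
    and h: "\<And>x. (h has_field_derivative h' x) (at x)"
    and g: "\<And>x. x \<in> {a..b} \<Longrightarrow> (g has_field_derivative g' x) (at x within {a..b})"
    and "f a = g a" "h b = g b" "f' a = g' a" "h' b = g' b"
  shows "(glue a b f g h has_field_derivative glue a b f' g' h' x) (at x)"
proof -
  consider "x < a" | "x = a" | "a < x" "x < b" | "x = b" | "b < x"
    using \<open>a < b\<close> by fastforce
  then show ?thesis
  proof cases
    case 1
    have "(glue a b f g h has_field_derivative f' x) (at x)"
      by (rule has_field_derivative_transform_within_open[OF f, of "{..<a}"])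
        (use 1 in \<open>auto simp: glue_def\<close>)
    with 1 show ?thesis by (simp add: glue_def)
  next
    case 2
    have "(glue a b f g h has_field_derivative g' a) (at a)"
    proof (rule has_field_derivative_at_join[where d = "b - a"])
      show "(f has_field_derivative g' a) (at a within {a - (b - a)..a})"
        using f[of a] \<open>f' a = g' a\<close> by (auto intro: has_field_derivative_at_within)
      show "(g has_field_derivative g' a) (at a within {a..a + (b - a)})"
        using g[of a] \<open>a < b\<close> by simp
    qed (use assms in \<open>auto simp: glue_def\<close>)
    with 2 \<open>a < b\<close> show ?thesis by (simp add: glue_def)
  next
    case 3
    then have "(g has_field_derivative g' x) (at x)"
      using g[of x] by (simp add: at_within_Icc_at)
    then have "(glue a b f g h has_field_derivative g' x) (at x)"
      by (rule has_field_derivative_transform_within_open[of _ _ _ "{a<..<b}"])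
        (use 3 in \<open>auto simp: glue_def\<close>)
    with 3 show ?thesis by (simp add: glue_def)
  next
    case 4
    have "(glue a b f g h has_field_derivative g' b) (at b)"
    proof (rule has_field_derivative_at_join[where d = "b - a"])
      show "(g has_field_derivative g' b) (at b within {b - (b - a)..b})"
        using g[of b] \<open>a < b\<close> by simp
      show "(h has_field_derivative g' b) (at b within {b..b + (b - a)})"
        using h[of b] \<open>h' b = g' b\<close> by (auto intro: has_field_derivative_at_within)
    qed (use assms in \<open>auto simp: glue_def\<close>)
    with 4 \<open>a < b\<close> show ?thesis by (simp add: glue_def)
  next
    case 5
    have "(glue a b f g h has_field_derivative h' x) (at x)"
      by (rule has_field_derivative_transform_within_open[OF h, of "{b<..}"])
        (use 5 \<open>a < b\<close> in \<open>auto simp: glue_def\<close>)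
    with 5 \<open>a < b\<close> show ?thesis by (simp add: glue_def)
  qed
qed

lemma continuous_on_glue:
  fixes f g h :: "real \<Rightarrow> real"
  assumes "a < b" "continuous_on UNIV f" "continuous_on {a..b} g" "continuous_on UNIV h"
    and "f a = g a" "h b = g b"
  shows "continuous_on UNIV (glue a b f g h)"
proof -
  have "continuous_on {..a} (glue a b f g h)"
    by (rule continuous_on_eq[OF continuous_on_subset[OF assms(2)]])
      (use assms in \<open>auto simp: glue_def\<close>)
  moreover have "continuous_on {a..b} (glue a b f g h)"
    by (rule continuous_on_eq[OF assms(3)]) (auto simp: glue_def)
  moreover have "continuous_on {b..} (glue a b f g h)"
    by (rule continuous_on_eq[OF continuous_on_subset[OF assms(4)]])
      (use assms in \<open>auto simp: glue_def\<close>)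
  moreover have "(UNIV :: real set) = {..a} \<union> ({a..b} \<union> {b..})"
    using \<open>a < b\<close> by auto
  ultimately show ?thesis
    by (metis closed_atMost closed_atLeast closed_atLeastAtMost closed_Un continuous_on_closed_Un)
qed

definition taylor_extend2 ::
    "real \<Rightarrow> real \<Rightarrow> (real \<Rightarrow> real) \<Rightarrow> (real \<Rightarrow> real) \<Rightarrow> (real \<Rightarrow> real) \<Rightarrow> real \<Rightarrow> real"
  where "taylor_extend2 a b g g' g'' = glue a b (\<lambda>x. g a + g' a * (x - a) + g'' a * (x - a)\<^sup>2 / 2) g
    (\<lambda>x. g b + g' b * (x - b) + g'' b * (x - b)\<^sup>2 / 2)"

definition taylor_extend1 :: "real \<Rightarrow> real \<Rightarrow> (real \<Rightarrow> real) \<Rightarrow> (real \<Rightarrow> real) \<Rightarrow> real \<Rightarrow> real"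
  where "taylor_extend1 a b g g' = glue a b (\<lambda>x. g a + g' a * (x - a)) g (\<lambda>x. g b + g' b * (x - b))"

definition taylor_extend0 :: "real \<Rightarrow> real \<Rightarrow> (real \<Rightarrow> real) \<Rightarrow> real \<Rightarrow> real"
  where "taylor_extend0 a b g = glue a b (\<lambda>_. g a) g (\<lambda>_. g b)"

lemma taylor_extend_eq:
  assumes "x \<in> {a..b}"
  shows "taylor_extend2 a b g g' g'' x = g x" "taylor_extend1 a b g g' x = g x"
    "taylor_extend0 a b g x = g x"
  using assms by (auto simp: taylor_extend2_def taylor_extend1_def taylor_extend0_def glue_def)

lemma taylor_extend2_has_field_derivative:
  assumes "a < b" "\<And>x. x \<in> {a..b} \<Longrightarrow> (g has_field_derivative g' x) (at x within {a..b})"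
  shows "(taylor_extend2 a b g g' g'' has_field_derivative taylor_extend1 a b g' g'' x) (at x)"
  unfolding taylor_extend2_def taylor_extend1_def
  by (rule glue_has_field_derivative[OF \<open>a < b\<close> _ _ assms(2)])
    (auto intro!: derivative_eq_intros simp: field_simps)

lemma taylor_extend1_has_field_derivative:
  assumes "a < b" "\<And>x. x \<in> {a..b} \<Longrightarrow> (g has_field_derivative g' x) (at x within {a..b})"
  shows "(taylor_extend1 a b g g' has_field_derivative taylor_extend0 a b g' x) (at x)"
  unfolding taylor_extend1_def taylor_extend0_def
  by (rule glue_has_field_derivative[OF \<open>a < b\<close> _ _ assms(2)]) (auto intro!: derivative_eq_intros)

lemma continuous_on_taylor_extend0:
  "a < b \<Longrightarrow> continuous_on {a..b} g \<Longrightarrow> continuous_on UNIV (taylor_extend0 a b g)"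
  unfolding taylor_extend0_def by (rule continuous_on_glue) auto

section \<open>Radial test functions\<close>

definition outer :: "real^'n \<Rightarrow> real^'n^'n"
  where "outer v = (\<chi> i j. v$i * v$j)"

lemma outer_mult_vec: "outer v *v h = (v \<bullet> h) *\<^sub>R v"
  by (simp add: outer_def vec_eq_iff matrix_vector_mult_def inner_vec_def sum_distrib_left
      sum_distrib_right mult.commute mult.left_commute)

lemma norm_power2_eq_sum: "(norm (v :: real^'n))\<^sup>2 = (\<Sum>i\<in>UNIV. v$i * v$i)"
  by (simp add: power2_norm_eq_inner inner_vec_def)

lemma has_derivative_norm_diff_power2:
  fixes c :: "real^'n"
  shows "((\<lambda>y. (norm (y - c))\<^sup>2) has_derivative (\<lambda>h. 2 * ((y - c) \<bullet> h))) (at y)"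
proof -
  have "((\<lambda>y. (y - c) \<bullet> (y - c)) has_derivative (\<lambda>h. (y - c) \<bullet> h + h \<bullet> (y - c))) (at y)"
    by (auto intro!: derivative_eq_intros)
  then show ?thesis
    by (simp add: power2_norm_eq_inner inner_commute)
qed

lemma C2_with_radial:
  fixes c :: "real^'n" and G G' G'' :: "real \<Rightarrow> real"
  assumes G: "\<And>s. (G has_real_derivative G' s) (at s)"
    and G': "\<And>s. (G' has_real_derivative G'' s) (at s)"
    and G'': "continuous_on UNIV G''"
  shows "C2_with (\<lambda>y. G ((norm (y - c))\<^sup>2))
     (\<lambda>y. (2 * G' ((norm (y - c))\<^sup>2)) *\<^sub>R (y - c))
     (\<lambda>y. (2 * G' ((norm (y - c))\<^sup>2)) *\<^sub>R mat 1 + (4 * G'' ((norm (y - c))\<^sup>2)) *\<^sub>R outer (y - c))"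
  unfolding C2_with_def
proof (intro conjI allI)
  have cont_G': "continuous_on UNIV G'"
    using G' by (meson DERIV_isCont continuous_at_imp_continuous_on)
  fix y :: "real^'n"
  have "((\<lambda>y. G ((norm (y - c))\<^sup>2)) has_derivative
      (\<lambda>h. G' ((norm (y - c))\<^sup>2) * (2 * ((y - c) \<bullet> h)))) (at y)"
    using has_derivative_compose[OF has_derivative_norm_diff_power2[of c y] G[unfolded has_field_derivative_def]]
    by (simp add: mult.commute)
  then show "((\<lambda>y. G ((norm (y - c))\<^sup>2)) has_derivative
      (\<lambda>h. ((2 * G' ((norm (y - c))\<^sup>2)) *\<^sub>R (y - c)) \<bullet> h)) (at y)"
    by (simp add: algebra_simps)
  have "((\<lambda>y. 2 * G' ((norm (y - c))\<^sup>2)) has_derivative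
      (\<lambda>h. 2 * (G'' ((norm (y - c))\<^sup>2) * (2 * ((y - c) \<bullet> h))))) (at y)"
    using has_derivative_compose[OF has_derivative_norm_diff_power2[of c y] G'[unfolded has_field_derivative_def]]
    by (intro has_derivative_mult_right) (simp add: mult.commute)
  from has_derivative_scaleR[OF this has_derivative_diff[OF has_derivative_ident has_derivative_const]]
  have "((\<lambda>y. (2 * G' ((norm (y - c))\<^sup>2)) *\<^sub>R (y - c)) has_derivative
      (\<lambda>h. (2 * G' ((norm (y - c))\<^sup>2)) *\<^sub>R (h - 0)
        + (2 * (G'' ((norm (y - c))\<^sup>2) * (2 * ((y - c) \<bullet> h)))) *\<^sub>R (y - c))) (at y)"
    by simp
  moreover have "(\<lambda>h. (2 * G' ((norm (y - c))\<^sup>2)) *\<^sub>R (h - 0)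
        + (2 * (G'' ((norm (y - c))\<^sup>2) * (2 * ((y - c) \<bullet> h)))) *\<^sub>R (y - c))
      = (\<lambda>h. ((2 * G' ((norm (y - c))\<^sup>2)) *\<^sub>R mat 1 + (4 * G'' ((norm (y - c))\<^sup>2)) *\<^sub>R outer (y - c)) *v h)"
    by (simp add: fun_eq_iff matrix_vector_mult_add_rdistrib scaleR_matrix_vector_assoc[symmetric]
        outer_mult_vec)
  ultimately show "((\<lambda>y. (2 * G' ((norm (y - c))\<^sup>2)) *\<^sub>R (y - c)) has_derivative
      (\<lambda>h. ((2 * G' ((norm (y - c))\<^sup>2)) *\<^sub>R mat 1 + (4 * G'' ((norm (y - c))\<^sup>2)) *\<^sub>R outer (y - c)) *v h))
      (at y)"
    by simp
  show "continuous_on UNIV (\<lambda>y. (2 * G' ((norm (y - c))\<^sup>2)) *\<^sub>R (y - c))"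
    by (intro continuous_intros continuous_on_compose2[OF cont_G']) auto
  show "continuous_on UNIV (\<lambda>y. (2 * G' ((norm (y - c))\<^sup>2)) *\<^sub>R mat 1
      + (4 * G'' ((norm (y - c))\<^sup>2)) *\<^sub>R outer (y - c))"
    unfolding outer_def
    by (intro continuous_intros continuous_on_compose2[OF cont_G'] continuous_on_compose2[OF G'']) auto
qed

lemma scalar_plus_outer_mult_nth:
  fixes v :: "real^'n"
  shows "((\<alpha> *\<^sub>R mat 1 + \<beta> *\<^sub>R outer v) ** (\<gamma> *\<^sub>R mat 1 + \<epsilon> *\<^sub>R outer v)) $ i $ i
     = \<alpha> * \<gamma> + (\<alpha> * \<epsilon> + \<beta> * \<gamma>) * (v$i * v$i) + \<beta> * \<epsilon> * (v$i * v$i) * (norm v)\<^sup>2"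
proof -
  have "((\<alpha> *\<^sub>R mat 1 + \<beta> *\<^sub>R outer v) ** (\<gamma> *\<^sub>R mat 1 + \<epsilon> *\<^sub>R outer v)) $ i $ i
      = (\<Sum>k\<in>UNIV. (\<alpha> * (if i = k then 1 else 0) + \<beta> * (v$i * v$k))
          * (\<gamma> * (if k = i then 1 else 0) + \<epsilon> * (v$k * v$i)))"
    by (simp add: matrix_matrix_mult_def mat_def outer_def)
  also have "\<dots> = (\<Sum>k\<in>UNIV. (if k = i then \<alpha> * \<gamma> + \<alpha> * \<epsilon> * (v$i * v$i) + \<beta> * \<gamma> * (v$i * v$i) else 0)
      + \<beta> * \<epsilon> * (v$i * v$i) * (v$k * v$k))"
    by (rule sum.cong) (auto simp: algebra_simps)
  also have "\<dots> = \<alpha> * \<gamma> + (\<alpha> * \<epsilon> + \<beta> * \<gamma>) * (v$i * v$i) + \<beta> * \<epsilon> * (v$i * v$i) * (norm v)\<^sup>2"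
    by (simp add: sum.distrib norm_power2_eq_sum sum_distrib_left algebra_simps)
  finally show ?thesis .
qed

lemma trace_scalar_plus_outer_mult:
  fixes v :: "real^'n"
  shows "trace ((\<alpha> *\<^sub>R mat 1 + \<beta> *\<^sub>R outer v) ** (\<gamma> *\<^sub>R mat 1 + \<epsilon> *\<^sub>R outer v))
    = \<alpha> * \<gamma> * real CARD('n) + (\<alpha> * \<epsilon> + \<beta> * \<gamma>) * (norm v)\<^sup>2 + \<beta> * \<epsilon> * ((norm v)\<^sup>2)\<^sup>2"
  unfolding trace_def scalar_plus_outer_mult_nth
  by (simp add: sum.distrib sum_distrib_left[symmetric] sum_distrib_right[symmetric]
      norm_power2_eq_sum[symmetric] algebra_simps power2_eq_square)

lemma Amat_scaleR:
  fixes v :: "real^'n"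
  assumes "v \<noteq> 0" "a \<noteq> 0"
  shows "Amat p (a *\<^sub>R v) = (1/p) *\<^sub>R mat 1 + ((1/p) * ((p - 2) / (norm v)\<^sup>2)) *\<^sub>R outer v"
proof -
  have norm_scaleR: "(norm (a *\<^sub>R v))\<^sup>2 = a\<^sup>2 * (norm v)\<^sup>2"
    by (simp add: power_mult_distrib)
  have "((p - 2) / (norm (a *\<^sub>R v))\<^sup>2) *\<^sub>R (\<chi> i j. (a *\<^sub>R v)$i * (a *\<^sub>R v)$j)
      = ((p - 2) / (norm v)\<^sup>2) *\<^sub>R outer v"
    unfolding norm_scaleR using assms by (simp add: outer_def vec_eq_iff power2_eq_square field_simps)
  then show ?thesis
    unfolding Amat_def by (simp add: scaleR_add_right)
qed

lemma Gop_scalar_plus_outer: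
  fixes v :: "real^'n"
  assumes "v \<noteq> 0" "a \<noteq> 0" "p \<noteq> 0"
  shows "Gop p (a *\<^sub>R v) (b *\<^sub>R mat 1 + e *\<^sub>R outer v)
     = - (1/p) * (b * (real CARD('n) + p - 2) + (p - 1) * e * (norm v)\<^sup>2)"
  unfolding Gop_def Amat_scaleR[OF assms(1,2)] trace_scalar_plus_outer_mult
  using assms by (simp add: field_simps power2_eq_square)

lemma Gstar_le_Gop:
  fixes \<xi> :: "real^'n"
  assumes "\<xi> \<noteq> 0"
  shows "Gstar p \<xi> X \<le> ereal (Gop p \<xi> X)"
proof -
  let ?F = "at (\<xi>, X) within {z :: (real^'n) \<times> (real^'n^'n). fst z \<noteq> 0}"
  have "(fst \<longlongrightarrow> \<xi>) ?F" "(snd \<longlongrightarrow> X) ?F"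
    using tendsto_fst[OF tendsto_ident_at] tendsto_snd[OF tendsto_ident_at] by auto
  moreover have "Gop p \<zeta> Y = - (\<Sum>i\<in>UNIV. \<Sum>k\<in>UNIV.
      (1/p) * ((if i = k then 1 else 0) + ((p - 2) / (norm \<zeta>)\<^sup>2) * (\<zeta>$i * \<zeta>$k)) * Y$k$i)"
    for \<zeta> :: "real^'n" and Y
    by (simp add: Gop_def Amat_def trace_def matrix_matrix_mult_def mat_def)
  ultimately have "((\<lambda>z. Gop p (fst z) (snd z)) \<longlongrightarrow> Gop p \<xi> X) ?F"
    using assms by (simp only:) (intro tendsto_intros tendsto_vec_nth; simp)
  then have lim: "((\<lambda>z. ereal (Gop p (fst z) (snd z))) \<longlongrightarrow> ereal (Gop p \<xi> X)) ?F"
    by (rule tendsto_ereal)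
  show ?thesis
  proof (cases "trivial_limit ?F")
    case False
    then show ?thesis
      unfolding Gstar_def using lim_imp_Limsup[OF False lim] by simp
  qed (simp add: Gstar_def)
qed

section \<open>Comparison with strict subsolutions\<close>

lemma open_lsc_superlevel:
  assumes "lsc f"
  shows "open {y. t < f y}"
proof (rule open_subopen[THEN iffD2], rule ballI)
  fix x assume x: "x \<in> {y. t < f y}"
  then have "\<forall>\<^sub>F y in at x. t < f y"
    using assms unfolding lsc_def by auto
  then obtain T where "open T" "x \<in> T" "\<forall>y\<in>T. y \<noteq> x \<longrightarrow> t < f y"
    unfolding eventually_at_topological by auto
  with x have "open T \<and> x \<in> T \<and> T \<subseteq> {y. t < f y}"
    by auto
  then show "\<exists>T. open T \<and> x \<in> T \<and> T \<subseteq> {y. t < f y}" ..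
qed

lemma lsc_diff_continuous:
  fixes u \<phi> :: "'a::topological_space \<Rightarrow> real"
  assumes "lsc u" "continuous_on UNIV \<phi>"
  shows "lsc (\<lambda>y. u y - \<phi> y)"
  unfolding lsc_def
proof (intro allI impI)
  fix x t assume "t < u x - \<phi> x"
  define e where "e = (u x - \<phi> x - t) / 2"
  have "e > 0" and t: "t = u x - \<phi> x - 2 * e"
    using \<open>t < u x - \<phi> x\<close> by (simp_all add: e_def field_simps)
  then have "\<forall>\<^sub>F y in at x. u x - e < u y"
    using assms(1) unfolding lsc_def by simp
  moreover have "\<forall>\<^sub>F y in at x. \<phi> y < \<phi> x + e"
    using assms(2) \<open>e > 0\<close> by (intro order_tendstoD) (auto simp: continuous_on_def)
  ultimately show "\<forall>\<^sub>F y in at x. t < u y - \<phi> y"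
    by eventually_elim (use t in linarith)
qed

lemma lsc_attains_min:
  fixes f :: "'a::topological_space \<Rightarrow> real"
  assumes "lsc f" "compact K" "K \<noteq> {}"
  obtains x where "x \<in> K" "\<And>y. y \<in> K \<Longrightarrow> f x \<le> f y"
proof -
  have "\<exists>x\<in>K. \<forall>y\<in>K. f x \<le> f y"
  proof (rule ccontr)
    assume "\<not> (\<exists>x\<in>K. \<forall>y\<in>K. f x \<le> f y)"
    then have "K \<subseteq> (\<Union>x\<in>K. {y. f x < f y})"
      by (auto simp: not_le)
    then obtain C where C: "C \<subseteq> K" "finite C" "K \<subseteq> (\<Union>x\<in>C. {y. f x < f y})"
      by (rule compactE_image[OF assms(2) open_lsc_superlevel[OF assms(1)]]) blast
    then have "C \<noteq> {}"
      using assms(3) by auto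
    then have "Min (f ` C) \<in> f ` C"
      using C(2) by (intro Min_in) auto
    then obtain x0 where "x0 \<in> C" "f x0 = Min (f ` C)"
      by auto
    moreover obtain x where "x \<in> C" "f x < f x0"
      using C \<open>x0 \<in> C\<close> by blast
    ultimately show False
      using C(2) by (metis Min_le finite_imageI image_eqI leD)
  qed
  then show ?thesis
    using that by blast
qed

lemma lsc_cball_above:
  fixes f :: "'a::metric_space \<Rightarrow> real"
  assumes "lsc f" "t < f x"
  obtains e where "e > 0" "\<And>y. y \<in> cball x e \<Longrightarrow> t < f y"
proof -
  have "\<forall>\<^sub>F y in at x. t < f y"
    using assms unfolding lsc_def by blast
  then obtain e where "e > 0" "\<And>y. y \<noteq> x \<Longrightarrow> dist y x < e \<Longrightarrow> t < f y"
    unfolding eventually_at by auto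
  then have "\<And>y. y \<in> cball x (e/2) \<Longrightarrow> t < f y"
    using assms(2) by (metis dist_commute mem_cball half_gt_zero order_le_less_trans field_sum_of_halves
        less_add_same_cancel1)
  with \<open>e > 0\<close> show ?thesis
    using that[of "e/2"] by simp
qed

lemma compact_norm_power2_shell:
  fixes c :: "'a::euclidean_space"
  shows "compact {y. s0 \<le> (norm (y - c))\<^sup>2 \<and> (norm (y - c))\<^sup>2 \<le> s2}"
proof -
  have "{y. s0 \<le> (norm (y - c))\<^sup>2 \<and> (norm (y - c))\<^sup>2 \<le> s2} \<subseteq> cball c (sqrt s2)"
    by (auto simp: dist_norm norm_minus_commute intro: real_le_rsqrt)
  then show ?thesis
    by (intro compact_eq_bounded_closed[THEN iffD2] conjI bounded_subset[OF bounded_cball]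
        closed_Collect_conj closed_Collect_le continuous_intros)
qed

lemma C2_with_continuous:
  assumes "C2_with \<phi> D\<phi> D2\<phi>"
  shows "continuous_on UNIV \<phi>"
  using assms unfolding C2_with_def
  by (blast intro: has_derivative_continuous continuous_at_imp_continuous_on)

lemma visc_super_comparison:
  fixes u \<phi> :: "real^'n \<Rightarrow> real"
  assumes "visc_super p H u" "C2_with \<phi> D\<phi> D2\<phi>"
    and "compact K" "K \<noteq> {}" "open U" "U \<subseteq> K"
    and boundary: "\<And>y. y \<in> K \<Longrightarrow> y \<notin> U \<Longrightarrow> \<phi> y \<le> u y"
    and strict: "\<And>y. y \<in> U \<Longrightarrow> Gstar p (D\<phi> y) (D2\<phi> y) < ereal (H (u y) (D\<phi> y))"
    and "y \<in> K"
  shows "\<phi> y \<le> u y"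
proof -
  have "lsc (\<lambda>y. u y - \<phi> y)"
    using assms(1,2) lsc_diff_continuous C2_with_continuous unfolding visc_super_def by blast
  then obtain y1 where y1: "y1 \<in> K" "\<And>y. y \<in> K \<Longrightarrow> u y1 - \<phi> y1 \<le> u y - \<phi> y"
    using lsc_attains_min assms(3,4) by blast
  show ?thesis
  proof (rule ccontr)
    assume "\<not> \<phi> y \<le> u y"
    then have "u y1 - \<phi> y1 < 0"
      using y1(2)[OF \<open>y \<in> K\<close>] by simp
    then have "y1 \<in> U"
      using boundary y1(1) by force
    then obtain e where "e > 0" "ball y1 e \<subseteq> U"
      using \<open>open U\<close> open_contains_ball by blast
    then have "\<exists>e>0. \<forall>y\<in>ball y1 e. u y - \<phi> y \<ge> u y1 - \<phi> y1"
      using y1(2) \<open>U \<subseteq> K\<close> by blast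
    then have "Gstar p (D\<phi> y1) (D2\<phi> y1) \<ge> ereal (H (u y1) (D\<phi> y1))"
      using assms(1,2) unfolding visc_super_def by blast
    with strict[OF \<open>y1 \<in> U\<close>] show False
      by simp
  qed
qed

section \<open>The barrier profile\<close>

definition zeta :: "real \<Rightarrow> real \<Rightarrow> real \<Rightarrow> real \<Rightarrow> real \<Rightarrow> real"
  where "zeta a0 d k S s = exp (a0 - (d/2) * ln s - (1/k) * ln (ln S - ln s))"

definition zeta' :: "real \<Rightarrow> real \<Rightarrow> real \<Rightarrow> real \<Rightarrow> real \<Rightarrow> real"
  where "zeta' a0 d k S s = zeta a0 d k S s / s * (1 / (k * (ln S - ln s)) - d/2)"

lemma zeta_pos: "zeta a0 d k S s > 0"
  by (simp add: zeta_def)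

lemma zeta_has_real_derivative:
  assumes "0 < s" "s < S" "k \<noteq> 0"
  shows "(zeta a0 d k S has_real_derivative zeta' a0 d k S s) (at s)"
proof -
  have "ln S - ln s > 0"
    using assms by simp
  then have "(zeta a0 d k S has_real_derivative
      zeta a0 d k S s * (- (d/2) * (1/s) - (1/k) * (1 / (ln S - ln s) * (- 1/s)))) (at s)"
    unfolding zeta_def using assms(1,3)
    by (auto intro!: derivative_eq_intros)
  moreover have "zeta a0 d k S s * (- (d/2) * (1/s) - (1/k) * (1 / (ln S - ln s) * (- 1/s)))
      = zeta' a0 d k S s"
    unfolding zeta'_def using assms \<open>ln S - ln s > 0\<close> by (simp add: field_simps)
  ultimately show ?thesis
    by simp
qed

lemma continuous_on_zeta: "0 < a \<Longrightarrow> b < S \<Longrightarrow> continuous_on {a..b} (zeta a0 d k S)"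
  unfolding zeta_def by (intro continuous_intros) (auto simp: less_diff_eq)

lemma continuous_on_zeta': "k \<noteq> 0 \<Longrightarrow> 0 < a \<Longrightarrow> b < S \<Longrightarrow> continuous_on {a..b} (zeta' a0 d k S)"
  unfolding zeta'_def zeta_def by (intro continuous_intros) (auto simp: less_diff_eq)

(* The profile s^(-d/2) alone makes the operator terms vanish (it gives a p-harmonic radial
   function); the factor L^(-1/k), L = log (S/s), leaves (4(p-1)/(pk)) zeta / L, which carries the
   same power L^(-1-1/k) as (zeta sqrt s)^(1+k). The ratio of the two sides is then a multiple of
   s^((1 - k(d-1))/2), increasing when k(d-1) <= 1, so a large a0 chosen at s = s0 works for all
   s >= s0. *)
lemma zeta_strict_subsolution:
  assumes "p > 1" "k > 0" "k * (d - 1) \<le> 1"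
    and "0 < s0" "s0 \<le> s" "s < S"
    and a0: "ln (4 * (p - 1) / (p * k)) \<le> k * a0 + (1 - k * (d - 1)) / 2 * ln s0"
  shows "(1/p) * (2 * (p - 1) * d * zeta a0 d k S s + 4 * (p - 1) * s * zeta' a0 d k S s)
     < (2 * zeta a0 d k S s * sqrt s) powr (1 + k)"
proof -
  define z l C where "z = zeta a0 d k S s" and "l = ln S - ln s" and "C = 4 * (p - 1) / (p * k)"
  have "s > 0" "l > 0" "z > 0" "C > 0"
    using assms by (simp_all add: l_def z_def zeta_pos C_def)
  have lhs: "(1/p) * (2 * (p - 1) * d * z + 4 * (p - 1) * s * zeta' a0 d k S s)
      = exp (ln C + ln z - ln l)"
    unfolding zeta'_def z_def[symmetric] l_def[symmetric] C_def
    using assms \<open>s > 0\<close> \<open>l > 0\<close> \<open>z > 0\<close> by (simp add: exp_diff exp_add field_simps)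
  have rhs: "(2 * z * sqrt s) powr (1 + k) = exp ((1 + k) * (ln 2 + ln z + ln s / 2))"
    using \<open>z > 0\<close> \<open>s > 0\<close> by (simp add: powr_def ln_mult ln_sqrt)
  have kz: "k * ln z + ln l = k * a0 - k * d / 2 * ln s"
    using \<open>k > 0\<close> by (simp add: z_def zeta_def l_def field_simps)
  have "ln C \<le> k * a0 + (1 - k * (d - 1)) / 2 * ln s0"
    using a0 by (simp add: C_def)
  also have "\<dots> \<le> k * a0 + (1 - k * (d - 1)) / 2 * ln s"
    using assms by (intro add_left_mono mult_left_mono) auto
  also have "\<dots> = k * ln z + ln l + (1 + k) * (ln s / 2)"
    unfolding kz by (simp add: field_simps)
  also have "\<dots> < k * ln z + ln l + (1 + k) * (ln s / 2) + (1 + k) * ln 2"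
    using \<open>k > 0\<close> by simp
  finally have "ln C + ln z - ln l < (1 + k) * (ln 2 + ln z + ln s / 2)"
    by (simp add: algebra_simps)
  then show ?thesis
    unfolding z_def[symmetric] lhs rhs by simp
qed

lemma zeta_le:
  assumes "0 < s0" "s0 \<le> s" "s \<le> s1" "s1 < S" "k > 0" "d \<ge> 0"
  shows "zeta a0 d k S s \<le> exp (a0 - (d/2) * ln s0 - (1/k) * ln (ln S - ln s1))"
proof -
  have "(d/2) * ln s0 \<le> (d/2) * ln s"
    using assms by (intro mult_left_mono) auto
  moreover have "(1/k) * ln (ln S - ln s1) \<le> (1/k) * ln (ln S - ln s)"
    using assms by (intro mult_left_mono) auto
  ultimately show ?thesis
    unfolding zeta_def by simp
qed

lemma zeta_ge:
  assumes "0 < s1" "s1 \<le> s" "s < S" "k > 0" "d \<ge> 0"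
  shows "exp (a0 - (d/2) * ln S + (1/k) * ln s1 - (1/k) * ln (S - s)) \<le> zeta a0 d k S s"
proof -
  have "(d/2) * ln s \<le> (d/2) * ln S"
    using assms by (intro mult_left_mono) auto
  have "ln S - ln s = ln (S / s)"
    using assms by (simp add: ln_div)
  also have "\<dots> \<le> S / s - 1"
    using assms by (intro ln_le_minus_one) auto
  also have "\<dots> = (S - s) / s"
    using assms by (simp add: field_simps)
  also have "\<dots> \<le> (S - s) / s1"
    using assms by (intro divide_left_mono) auto
  finally have "ln (ln S - ln s) \<le> ln ((S - s) / s1)"
    using assms by simp
  also have "\<dots> = ln (S - s) - ln s1"
    using assms by (simp add: ln_div)
  finally have "(1/k) * ln (ln S - ln s) \<le> (1/k) * (ln (S - s) - ln s1)"
    using assms by (intro mult_left_mono) auto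
  with \<open>(d/2) * ln s \<le> (d/2) * ln S\<close> show ?thesis
    unfolding zeta_def by (simp add: algebra_simps)
qed

lemma integral_zeta_le:
  assumes "0 < s0" "s0 \<le> s1" "s1 < S" "k > 0" "d \<ge> 0"
  shows "integral {s0..s1} (zeta a0 d k S)
    \<le> (s1 - s0) * exp (a0 - (d/2) * ln s0 - (1/k) * ln (ln S - ln s1))"
proof -
  have "integral {s0..s1} (zeta a0 d k S)
      \<le> integral {s0..s1} (\<lambda>_. exp (a0 - (d/2) * ln s0 - (1/k) * ln (ln S - ln s1)))"
    using assms by (intro integral_le integrable_continuous_real continuous_on_zeta zeta_le) auto
  then show ?thesis
    using assms by simp
qed

lemma integral_zeta_ge:
  fixes a0 d k S s1 s2 :: real
  assumes "0 < s1" "s1 \<le> s2" "s2 < S" "k > 0" "k < 1" "d \<ge> 0"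
  defines "B \<equiv> exp (a0 - (d/2) * ln S + (1/k) * ln s1)" and "\<beta> \<equiv> 1/k - 1"
  shows "(B/\<beta>) * exp (- \<beta> * ln (S - s2)) - (B/\<beta>) * exp (- \<beta> * ln (S - s1))
    \<le> integral {s1..s2} (zeta a0 d k S)"
proof -
  have "\<beta> > 0"
    using assms by (simp add: \<beta>_def)
  define F where "F s = (B/\<beta>) * exp (- \<beta> * ln (S - s))" for s
  define f where "f s = exp (a0 - (d/2) * ln S + (1/k) * ln s1 - (1/k) * ln (S - s))" for s
  have "(F has_real_derivative f s) (at s within {s1..s2})" if "s \<in> {s1..s2}" for s
  proof -
    have "S - s > 0"
      using that assms by auto
    then have "(F has_real_derivative (B/\<beta>) * (exp (- \<beta> * ln (S - s)) * (- \<beta> * (1 / (S - s) * - 1))))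
        (at s)"
      unfolding F_def by (auto intro!: derivative_eq_intros)
    moreover have "(B/\<beta>) * (exp (- \<beta> * ln (S - s)) * (- \<beta> * (1 / (S - s) * - 1)))
        = B * exp (- \<beta> * ln (S - s) - ln (S - s))"
      using \<open>\<beta> > 0\<close> \<open>S - s > 0\<close> by (simp add: exp_diff field_simps)
    moreover have "- \<beta> * ln (S - s) - ln (S - s) = - (1/k) * ln (S - s)"
      by (simp add: \<beta>_def algebra_simps)
    ultimately show ?thesis
      unfolding f_def B_def by (simp add: has_field_derivative_at_within exp_add[symmetric] algebra_simps)
  qed
  then have "(f has_integral (F s2 - F s1)) {s1..s2}"
    using assms(2) by (intro fundamental_theorem_of_calculus)
      (auto simp: has_real_derivative_iff_has_vector_derivative[symmetric])
  moreover have "integral {s1..s2} f \<le> integral {s1..s2} (zeta a0 d k S)"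
    unfolding f_def using assms
    by (intro integral_le integrable_continuous_real continuous_on_zeta zeta_ge continuous_intros) auto
  ultimately show ?thesis
    unfolding F_def by (simp add: integral_unique)
qed

lemma zeta_integral_unbounded:
  assumes "0 < s1" "s1 < S" "0 < k" "k < 1" "d \<ge> 0" "\<delta> > 0"
  obtains s2 where "s1 < s2" "s2 < S" "\<delta> \<le> integral {s1..s2} (zeta a0 d k S)"
proof -
  define B where "B = exp (a0 - (d/2) * ln S + (1/k) * ln s1)"
  define \<beta> where "\<beta> = 1/k - 1"
  have "B > 0" "\<beta> > 0"
    using assms by (simp_all add: B_def \<beta>_def)
  define Y where "Y = exp (- \<beta> * ln (S - s1)) + \<beta> * \<delta> / B"
  have "Y > exp (- \<beta> * ln (S - s1))"
    using \<open>B > 0\<close> \<open>\<beta> > 0\<close> \<open>\<delta> > 0\<close> by (simp add: Y_def)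
  moreover have "Y > 0"
    using calculation by (meson exp_gt_zero less_trans)
  ultimately have "ln Y > - \<beta> * ln (S - s1)"
    by (metis exp_less_cancel_iff exp_ln)
  (* Invert the antiderivative (B/beta) (S - s)^(-beta) of the lower bound from zeta_ge. *)
  define s2 where "s2 = S - exp (- ln Y / \<beta>)"
  have "- ln Y / \<beta> < ln (S - s1)"
    using \<open>ln Y > - \<beta> * ln (S - s1)\<close> \<open>\<beta> > 0\<close> by (simp add: field_simps)
  then have "exp (- ln Y / \<beta>) < S - s1"
    using assms by (metis exp_less_cancel_iff exp_ln diff_gt_0_iff_gt)
  then have "s1 < s2" "s2 < S"
    by (simp_all add: s2_def)
  moreover have "exp (- \<beta> * ln (S - s2)) = Y"
    using \<open>\<beta> > 0\<close> \<open>Y > 0\<close> by (simp add: s2_def)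
  then have "(B/\<beta>) * exp (- \<beta> * ln (S - s2)) - (B/\<beta>) * exp (- \<beta> * ln (S - s1)) = \<delta>"
    using \<open>B > 0\<close> \<open>\<beta> > 0\<close> by (simp add: Y_def field_simps)
  then have "\<delta> \<le> integral {s1..s2} (zeta a0 d k S)"
    using integral_zeta_ge[of s1 s2 S k d a0] assms \<open>s1 < s2\<close> \<open>s2 < S\<close>
    unfolding B_def \<beta>_def by simp
  ultimately show ?thesis
    using that by blast
qed

lemma exists_zeta_integral_split:
  assumes "0 < s0" "s0 < s1" "0 < k" "k < 1" "d \<ge> 0" "\<delta> > 0"
  obtains S s2 where "s1 < s2" "s2 < S" "integral {s0..s1} (zeta a0 d k S) \<le> \<delta>/2"
    "\<delta> \<le> integral {s0..s2} (zeta a0 d k S)"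
proof -
  define c where "c = 2 * (s1 - s0 + 1) / \<delta>"
  define L where "L = exp (k * (a0 - (d/2) * ln s0 + ln c))"
  define S where "S = s1 * exp L"
  have "c > 0" "L > 0"
    using assms by (simp_all add: c_def L_def)
  then have "s1 < S"
    using assms by (simp add: S_def)
  have "ln S - ln s1 = L"
    using assms by (simp add: S_def ln_mult)
  moreover have "(1/k) * ln L = a0 - (d/2) * ln s0 + ln c"
    using assms by (simp add: L_def)
  ultimately have "exp (a0 - (d/2) * ln s0 - (1/k) * ln (ln S - ln s1)) = 1 / c"
    using \<open>c > 0\<close> by (simp add: exp_minus exp_diff inverse_eq_divide)
  then have "integral {s0..s1} (zeta a0 d k S) \<le> (s1 - s0) / c"
    using integral_zeta_le[of s0 s1 S k d a0] assms \<open>s1 < S\<close> by simp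
  also have "\<dots> \<le> \<delta>/2"
    using assms by (simp add: c_def field_simps)
  finally have "integral {s0..s1} (zeta a0 d k S) \<le> \<delta>/2" .
  obtain s2 where "s1 < s2" "s2 < S" "\<delta> \<le> integral {s1..s2} (zeta a0 d k S)"
    using zeta_integral_unbounded[OF _ \<open>s1 < S\<close>] assms by (metis less_trans)
  moreover have "0 \<le> integral {s0..s1} (zeta a0 d k S)"
    using assms \<open>s1 < S\<close>
    by (intro integral_nonneg integrable_continuous_real continuous_on_zeta) (auto intro: less_imp_le zeta_pos)
  moreover have "integral {s0..s1} (zeta a0 d k S) + integral {s1..s2} (zeta a0 d k S)
      = integral {s0..s2} (zeta a0 d k S)"
    using assms \<open>s1 < s2\<close> \<open>s2 < S\<close>
    by (intro Henstock_Kurzweil_Integration.integral_combine integrable_continuous_real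
        continuous_on_zeta) auto
  ultimately show ?thesis
    using that \<open>integral {s0..s1} (zeta a0 d k S) \<le> \<delta>/2\<close> by fastforce
qed

lemma barrier_profile:
  fixes N p k s0 s1 \<delta> M :: real
  assumes "p > 1" "N \<ge> 1" "0 < k" "k < 1" "k * ((N - 1) / (p - 1)) \<le> 1"
    and "0 < s0" "s0 < s1" "\<delta> > 0"
  obtains s2 g g' g'' where "s1 < s2"
    "\<And>s. s \<in> {s0..s2} \<Longrightarrow> (g has_real_derivative g' s) (at s within {s0..s2})"
    "\<And>s. s \<in> {s0..s2} \<Longrightarrow> (g' has_real_derivative g'' s) (at s within {s0..s2})"
    "continuous_on {s0..s2} g''"
    "g s0 = M + \<delta>" "g s2 \<le> M" "M + \<delta>/2 \<le> g s1"
    "\<And>s. s \<in> {s0<..<s2} \<Longrightarrow> g' s < 0"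
    "\<And>s. s \<in> {s0<..<s2} \<Longrightarrow>
      - (1/p) * (2 * g' s * (N + p - 2) + 4 * (p - 1) * s * g'' s) < (2 * \<bar>g' s\<bar> * sqrt s) powr (1 + k)"
proof -
  define d where "d = (N + p - 2) / (p - 1)"
  have "N + p - 2 = (p - 1) * d" and d1: "d - 1 = (N - 1) / (p - 1)"
    using assms by (simp_all add: d_def field_simps)
  have "k * (d - 1) \<le> 1"
    unfolding d1 by (fact assms(5))
  have "d \<ge> 0"
    unfolding d_def using assms by (intro divide_nonneg_nonneg) auto
  define a0 where "a0 = (ln (4 * (p - 1) / (p * k)) - (1 - k * (d - 1)) / 2 * ln s0) / k"
  obtain S s2 where S: "s1 < s2" "s2 < S" "integral {s0..s1} (zeta a0 d k S) \<le> \<delta>/2"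
    "\<delta> \<le> integral {s0..s2} (zeta a0 d k S)"
    by (rule exists_zeta_integral_split[of s0 s1 k d \<delta> a0]) (use assms \<open>d \<ge> 0\<close> in auto)
  define g where "g s = M + \<delta> - integral {s0..s} (zeta a0 d k S)" for s
  have cont: "continuous_on {s0..s2} (zeta a0 d k S)"
    using assms S by (intro continuous_on_zeta) auto
  show ?thesis
  proof (rule that[of s2 g "\<lambda>s. - zeta a0 d k S s" "\<lambda>s. - zeta' a0 d k S s"])
    fix s assume s: "s \<in> {s0..s2}"
    show "(g has_real_derivative - zeta a0 d k S s) (at s within {s0..s2})"
      unfolding g_def using integral_has_real_derivative[OF cont s]
      by (auto intro!: derivative_eq_intros)
    show "((\<lambda>s. - zeta a0 d k S s) has_real_derivative - zeta' a0 d k S s) (at s within {s0..s2})"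
      using s assms S by (intro has_field_derivative_at_within[OF DERIV_minus] zeta_has_real_derivative) auto
  next
    fix s assume s: "s \<in> {s0<..<s2}"
    have "ln (4 * (p - 1) / (p * k)) \<le> k * a0 + (1 - k * (d - 1)) / 2 * ln s0"
      using assms by (simp add: a0_def)
    then have "(1/p) * (2 * (p - 1) * d * zeta a0 d k S s + 4 * (p - 1) * s * zeta' a0 d k S s)
        < (2 * zeta a0 d k S s * sqrt s) powr (1 + k)"
      using s assms S \<open>k * (d - 1) \<le> 1\<close> by (intro zeta_strict_subsolution) auto
    then show "- (1/p) * (2 * - zeta a0 d k S s * (N + p - 2) + 4 * (p - 1) * s * - zeta' a0 d k S s)
        < (2 * \<bar>- zeta a0 d k S s\<bar> * sqrt s) powr (1 + k)"
      unfolding \<open>N + p - 2 = (p - 1) * d\<close> using zeta_pos[of a0 d k S s]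
      by (simp add: algebra_simps)
  next
    show "continuous_on {s0..s2} (\<lambda>s. - zeta' a0 d k S s)"
      using assms S by (intro continuous_on_minus continuous_on_zeta') auto
  qed (use S zeta_pos in \<open>simp_all add: g_def\<close>)
qed

lemma radial_barrier:
  fixes x0 :: "real^'n" and p k s0 s1 \<delta> M :: real
  assumes "p > 1" "0 < k" "k < 1" "k * ((real CARD('n) - 1) / (p - 1)) \<le> 1"
    and "0 < s0" "s0 < s1" "\<delta> > 0"
  obtains s2 \<phi> D\<phi> D2\<phi> where "s1 < s2" "C2_with \<phi> D\<phi> D2\<phi>"
    "\<And>y. (norm (y - x0))\<^sup>2 = s0 \<Longrightarrow> \<phi> y = M + \<delta>"
    "\<And>y. (norm (y - x0))\<^sup>2 = s2 \<Longrightarrow> \<phi> y \<le> M"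
    "\<And>y. (norm (y - x0))\<^sup>2 = s1 \<Longrightarrow> M + \<delta>/2 \<le> \<phi> y"
    "\<And>y. s0 < (norm (y - x0))\<^sup>2 \<Longrightarrow> (norm (y - x0))\<^sup>2 < s2 \<Longrightarrow>
      Gstar p (D\<phi> y) (D2\<phi> y) < ereal (norm (D\<phi> y) powr (1 + k))"
proof -
  let ?N = "real CARD('n)"
  obtain s2 g g' g'' where profile: "s1 < s2"
    "\<And>s. s \<in> {s0..s2} \<Longrightarrow> (g has_real_derivative g' s) (at s within {s0..s2})"
    "\<And>s. s \<in> {s0..s2} \<Longrightarrow> (g' has_real_derivative g'' s) (at s within {s0..s2})"
    "continuous_on {s0..s2} g''"
    "g s0 = M + \<delta>" "g s2 \<le> M" "M + \<delta>/2 \<le> g s1"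
    "\<And>s. s \<in> {s0<..<s2} \<Longrightarrow> g' s < 0"
    "\<And>s. s \<in> {s0<..<s2} \<Longrightarrow>
      - (1/p) * (2 * g' s * (?N + p - 2) + 4 * (p - 1) * s * g'' s) < (2 * \<bar>g' s\<bar> * sqrt s) powr (1 + k)"
    by (rule barrier_profile[of p ?N k s0 s1 \<delta> M]) (use assms in auto)
  have "s0 < s2"
    using profile(1) assms by simp
  define G G' G'' where "G = taylor_extend2 s0 s2 g g' g''" and "G' = taylor_extend1 s0 s2 g' g''"
    and "G'' = taylor_extend0 s0 s2 g''"
  have G_eq: "G s = g s" "G' s = g' s" "G'' s = g'' s" if "s \<in> {s0..s2}" for s
    using that by (simp_all add: G_def G'_def G''_def taylor_extend_eq)
  have "C2_with (\<lambda>y. G ((norm (y - x0))\<^sup>2)) (\<lambda>y. (2 * G' ((norm (y - x0))\<^sup>2)) *\<^sub>R (y - x0))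
     (\<lambda>y. (2 * G' ((norm (y - x0))\<^sup>2)) *\<^sub>R mat 1 + (4 * G'' ((norm (y - x0))\<^sup>2)) *\<^sub>R outer (y - x0))"
    unfolding G_def G'_def G''_def using \<open>s0 < s2\<close> profile(2-4)
    by (intro C2_with_radial taylor_extend2_has_field_derivative taylor_extend1_has_field_derivative
        continuous_on_taylor_extend0)
  then show ?thesis
  proof (rule that[OF profile(1)])
    fix y :: "real^'n"
    assume y: "s0 < (norm (y - x0))\<^sup>2" "(norm (y - x0))\<^sup>2 < s2"
    define s v where "s = (norm (y - x0))\<^sup>2" and "v = y - x0"
    have "s \<in> {s0<..<s2}" "v \<noteq> 0" "(norm v)\<^sup>2 = s"
      using y assms by (auto simp: s_def v_def)
    then have "g' s < 0" "sqrt s = norm v"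
      using profile(8) by auto
    have "Gstar p ((2 * g' s) *\<^sub>R v) ((2 * g' s) *\<^sub>R mat 1 + (4 * g'' s) *\<^sub>R outer v)
        \<le> ereal (Gop p ((2 * g' s) *\<^sub>R v) ((2 * g' s) *\<^sub>R mat 1 + (4 * g'' s) *\<^sub>R outer v))"
      using \<open>g' s < 0\<close> \<open>v \<noteq> 0\<close> by (intro Gstar_le_Gop) simp
    also have "Gop p ((2 * g' s) *\<^sub>R v) ((2 * g' s) *\<^sub>R mat 1 + (4 * g'' s) *\<^sub>R outer v)
        = - (1/p) * (2 * g' s * (?N + p - 2) + 4 * (p - 1) * s * g'' s)"
      using \<open>g' s < 0\<close> \<open>v \<noteq> 0\<close> \<open>(norm v)\<^sup>2 = s\<close> assms
      by (simp add: Gop_scalar_plus_outer algebra_simps)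
    also have "\<dots> < (2 * \<bar>g' s\<bar> * sqrt s) powr (1 + k)"
      using profile(9) \<open>s \<in> {s0<..<s2}\<close> by blast
    also have "2 * \<bar>g' s\<bar> * sqrt s = norm ((2 * g' s) *\<^sub>R v)"
      using \<open>sqrt s = norm v\<close> by (simp add: abs_mult)
    finally show "Gstar p ((2 * G' ((norm (y - x0))\<^sup>2)) *\<^sub>R (y - x0))
        ((2 * G' ((norm (y - x0))\<^sup>2)) *\<^sub>R mat 1 + (4 * G'' ((norm (y - x0))\<^sup>2)) *\<^sub>R outer (y - x0))
      < ereal (norm ((2 * G' ((norm (y - x0))\<^sup>2)) *\<^sub>R (y - x0)) powr (1 + k))"
      using G_eq \<open>s \<in> {s0<..<s2}\<close> by (simp add: s_def v_def)
  qed (use G_eq profile(1,5-7) assms \<open>s0 < s2\<close> in auto)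
qed

section \<open>Liouville property\<close>

lemma lsc_nonconstant_gap:
  fixes u :: "'a::metric_space \<Rightarrow> real"
  assumes "lsc u" "bdd_below (range u)" "\<nexists>c. \<forall>x. u x = c"
  obtains M \<delta> x0 e x1 where "\<delta> > 0" "e > 0" "\<And>x. M \<le> u x"
    "\<And>y. y \<in> cball x0 e \<Longrightarrow> M + \<delta> < u y" "u x1 < M + \<delta>/2"
proof -
  define M where "M = Inf (range u)"
  have M: "M \<le> u x" for x
    using assms(2) by (simp add: M_def cInf_lower)
  then obtain x0 where "M < u x0"
    using assms(3) by (metis order_less_le)
  define \<delta> where "\<delta> = (u x0 - M) / 2"
  have "\<delta> > 0" "M + \<delta> < u x0"
    using \<open>M < u x0\<close> by (simp_all add: \<delta>_def field_simps)
  moreover obtain e where "e > 0" "\<And>y. y \<in> cball x0 e \<Longrightarrow> M + \<delta> < u y"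
    using lsc_cball_above[OF assms(1) \<open>M + \<delta> < u x0\<close>] by blast
  moreover obtain x1 where "u x1 < M + \<delta>/2"
    using \<open>\<delta> > 0\<close> assms(2) cInf_less_iff[of "range u" "M + \<delta>/2"] unfolding M_def by auto
  ultimately show ?thesis
    using that[OF \<open>\<delta> > 0\<close> \<open>e > 0\<close> M] by blast
qed

lemma visc_super_gradient_liouville:
  fixes u :: "real^'n \<Rightarrow> real" and H :: "real \<Rightarrow> real^'n \<Rightarrow> real"
  assumes "p > 1" "0 < k" "k < 1" "k * ((real CARD('n) - 1) / (p - 1)) \<le> 1"
    and H: "\<And>r \<xi>. norm \<xi> powr (1 + k) \<le> H r \<xi>"
    and u: "visc_super p H u" "bdd_below (range u)"
  shows "\<exists>c. \<forall>x. u x = c"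
proof (rule ccontr)
  assume nonconst: "\<nexists>c. \<forall>x. u x = c"
  have "lsc u"
    using u(1) unfolding visc_super_def by blast
  obtain M \<delta> x0 e x1 where "\<delta> > 0" "e > 0" and M: "\<And>x. M \<le> u x"
    and near_x0: "\<And>y. y \<in> cball x0 e \<Longrightarrow> M + \<delta> < u y" and "u x1 < M + \<delta>/2"
    by (rule lsc_nonconstant_gap[OF \<open>lsc u\<close> u(2) nonconst]) blast
  define s0 s1 where "s0 = e\<^sup>2" and "s1 = (norm (x1 - x0))\<^sup>2"
  have inner: "M + \<delta> \<le> u y" if "(norm (y - x0))\<^sup>2 \<le> s0" for y
    using that near_x0[of y] \<open>e > 0\<close>
    by (auto simp: s0_def dist_norm norm_minus_commute power2_le_iff_abs_le)
  have "s0 < s1"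
    using inner[of x1] \<open>u x1 < M + \<delta>/2\<close> \<open>\<delta> > 0\<close> by (force simp: s1_def)
  obtain s2 \<phi> D\<phi> D2\<phi> where barrier: "s1 < s2" "C2_with \<phi> D\<phi> D2\<phi>"
    "\<And>y. (norm (y - x0))\<^sup>2 = s0 \<Longrightarrow> \<phi> y = M + \<delta>"
    "\<And>y. (norm (y - x0))\<^sup>2 = s2 \<Longrightarrow> \<phi> y \<le> M"
    "\<And>y. (norm (y - x0))\<^sup>2 = s1 \<Longrightarrow> M + \<delta>/2 \<le> \<phi> y"
    "\<And>y. s0 < (norm (y - x0))\<^sup>2 \<Longrightarrow> (norm (y - x0))\<^sup>2 < s2 \<Longrightarrow>
      Gstar p (D\<phi> y) (D2\<phi> y) < ereal (norm (D\<phi> y) powr (1 + k))"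
    by (rule radial_barrier[of p k s0 s1 \<delta> x0 M])
      (use assms \<open>e > 0\<close> \<open>s0 < s1\<close> \<open>\<delta> > 0\<close> in \<open>auto simp: s0_def\<close>)
  define K U where "K = {y. s0 \<le> (norm (y - x0))\<^sup>2 \<and> (norm (y - x0))\<^sup>2 \<le> s2}"
    and "U = {y. s0 < (norm (y - x0))\<^sup>2 \<and> (norm (y - x0))\<^sup>2 < s2}"
  have "x1 \<in> K"
    using \<open>s0 < s1\<close> barrier(1) by (simp add: K_def s1_def)
  have "\<phi> x1 \<le> u x1"
  proof (rule visc_super_comparison[OF u(1) barrier(2)])
    show "compact K" "K \<noteq> {}" "U \<subseteq> K"
      using compact_norm_power2_shell \<open>x1 \<in> K\<close> by (auto simp: K_def U_def)
    show "open U"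
      unfolding U_def by (intro open_Collect_conj open_Collect_less continuous_intros)
    show "\<phi> y \<le> u y" if "y \<in> K" "y \<notin> U" for y
      using that barrier(3,4)[of y] inner[of y] M[of y] by (force simp: K_def U_def)
    show "Gstar p (D\<phi> y) (D2\<phi> y) < ereal (H (u y) (D\<phi> y))" if "y \<in> U" for y
      using that barrier(6)[of y] H[of "D\<phi> y" "u y"] by (auto simp: U_def intro: order.strict_trans2)
  qed (fact \<open>x1 \<in> K\<close>)
  then show False
    using barrier(5)[of x1] \<open>u x1 < M + \<delta>/2\<close> by (simp add: s1_def)
qed

lemma gradient_exponent_bounds:
  fixes N p \<gamma> :: real
  assumes "N \<ge> 2" "p > 1" "p > 2 \<Longrightarrow> (p - 1) * (N - 1) > 1"
    and "(p > 2 \<and> 1 < \<gamma> \<and> \<gamma> \<le> ((p - 1) * (N - 1) + 1) / ((p - 1) * (N - 1)))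
      \<or> (p < 2 \<and> 1 < \<gamma> \<and> \<gamma> \<le> (N + p - 2) / (N - 1))"
  shows "0 < \<gamma> - 1" "\<gamma> - 1 < 1" "(\<gamma> - 1) * ((N - 1) / (p - 1)) \<le> 1"
proof -
  from assms(4) consider (degenerate) "p > 2" "1 < \<gamma>" "\<gamma> - 1 \<le> 1 / ((p - 1) * (N - 1))"
    | (singular) "p < 2" "1 < \<gamma>" "\<gamma> - 1 \<le> (p - 1) / (N - 1)"
    using assms(1-3) by (auto simp: field_simps)
  then have "\<gamma> - 1 < 1 \<and> (\<gamma> - 1) * ((N - 1) / (p - 1)) \<le> 1"
  proof cases
    case degenerate
    have "(\<gamma> - 1) * ((N - 1) / (p - 1)) \<le> 1 / ((p - 1) * (N - 1)) * ((N - 1) / (p - 1))"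
      using degenerate assms(1,2) by (intro mult_right_mono) auto
    also have "\<dots> = 1 / (p - 1)\<^sup>2"
      using assms(1,2) by (simp add: power2_eq_square)
    also have "\<dots> \<le> 1"
      using degenerate(1) by (simp add: power_le_one_iff[symmetric] one_le_power)
    finally have "(\<gamma> - 1) * ((N - 1) / (p - 1)) \<le> 1" .
    moreover have "1 / ((p - 1) * (N - 1)) < 1"
      using degenerate(1) assms(3) by simp
    ultimately show ?thesis
      using degenerate(3) by linarith
  next
    case singular
    have "(\<gamma> - 1) * ((N - 1) / (p - 1)) \<le> (p - 1) / (N - 1) * ((N - 1) / (p - 1))"
      using singular assms(1,2) by (intro mult_right_mono) auto
    moreover have "(p - 1) / (N - 1) * ((N - 1) / (p - 1)) = 1" "(p - 1) / (N - 1) < 1"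
      using singular(1) assms(1,2) by simp_all
    ultimately show ?thesis
      using singular(3) by linarith
  qed
  then show "0 < \<gamma> - 1" "\<gamma> - 1 < 1" "(\<gamma> - 1) * ((N - 1) / (p - 1)) \<le> 1"
    using assms(4) by auto
qed

theorem mainTheorem10:
  fixes u :: "real^'n \<Rightarrow> real" and p q \<gamma> :: real
  assumes "CARD('n) \<ge> 2"
    and "p > 1" and "p \<noteq> 2"
    and "p > 2 \<Longrightarrow> (p - 1) * (real CARD('n) - 1) > 1"
    and "\<forall>x. u x \<ge> 0"
    and "visc_super p (\<lambda>r \<xi>. r powr q + norm \<xi> powr \<gamma>) u"
    and "(p > 2 \<and> 1 < \<gamma> \<and>
           \<gamma> \<le> ((p - 1) * (real CARD('n) - 1) + 1) / ((p - 1) * (real CARD('n) - 1)) \<and>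
           q > ((p - 1) * (real CARD('n) - 1) + 1) / ((p - 1) * (real CARD('n) - 1) - 1))
       \<or> (p < 2 \<and> 1 < \<gamma> \<and>
           \<gamma> \<le> (real CARD('n) + p - 2) / (real CARD('n) - 1) \<and>
           q > (real CARD('n) + p - 2) / (real CARD('n) - p))"
  shows "\<exists>c. \<forall>x. u x = c"
proof -
  have "0 < \<gamma> - 1" "\<gamma> - 1 < 1" "(\<gamma> - 1) * ((real CARD('n) - 1) / (p - 1)) \<le> 1"
    using gradient_exponent_bounds[of "real CARD('n)" p \<gamma>] assms(1,2,4,7) by auto
  moreover have "norm \<xi> powr (1 + (\<gamma> - 1)) \<le> r powr q + norm \<xi> powr \<gamma>" for r and \<xi> :: "real^'n"
    by simp
  moreover have "bdd_below (range u)"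
    using assms(5) by (auto intro: bdd_belowI2)
  ultimately show ?thesis
    by (intro visc_super_gradient_liouville[OF assms(2) _ _ _ _ assms(6)]) auto
qed

end
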